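(* Fix a firm $A\subset\mathcal{A}$, a full-support skill distribution $p$, a full-support perception $q$, and signal structures with $\langle S',\pi'\rangle\succsim_G\langle S,\pi\rangle$ via a garbling kernel $g$. Fix surplus-maximizing selections $\widehat a_s$ ($s\in S$) and $\widehat a'_{s'}$ ($s'\in S'$) as in the context. (a) $W_A(p,q,\langle S',\pi'\rangle)-W_A(p,q,\langle S,\pi\rangle)=\mathcal{C}_A(p,q,\langle S,\pi\rangle,\langle S',\pi'\rangle)+\mathcal{I}_A(p,q,\langle S,\pi\rangle,\langle S',\pi'\rangle)$. (b) $\mathcal{I}_A(p,q,\langle S,\pi\rangle,\langle S',\pi'\rangle)\ge 0$. Suppose in addition that $A\subset\mathcal{A}_M$ and that $\langle S',\pi'\rangle$ is MLR. Then: (c) if $p\succsim_{LR}q$, then $\mathcal{C}_A(p,q,\langle S,\pi\rangle,\langle S',\pi'\rangle)\ge 0$; (d) if $q\succsim_{LR}p$, then $\mathcal{C}_A(p,q,\langle S,\pi\rangle,\langle S',\pi'\rangle)\le 0$.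
   Context: Let $\Theta\subset\mathbb{R}$ be a finite set of skill types with $|\Theta|\ge 2$. A task is a vector $a\in\mathcal{A}:=\mathbb{R}^\Theta$. A firm is a non-empty finite set $A\subset\mathcal{A}$. The firm is monotone if $A\subset\mathcal{A}_M:=\{a\in\mathbb{R}^\Theta: a(\theta')>a(\theta)\text{ whenever }\theta'>\theta\}$. A signal structure $\langle S,\pi\rangle$ consists of a non-empty finite set $S$ and a map $\pi:S\times\Theta\to[0,1]$ with $\sum_{s}\pi(s|\theta)=1$ for each $\theta$, such that every $s\in S$ has $\pi(s|\theta)>0$ for some $\theta$. Distributions and pay: - $p,q\in\Delta(\Theta)$ have full support. - Posterior: $q_{\langle S,\pi\rangle}(\theta|s):=q(\theta)\pi(s|\theta)/\sum_{\theta'}q(\theta')\pi(s|\theta')$. - Pay: $w_A(s,q,\langle S,\pi\rangle):=\max_{a\in A}\sum_\theta q_{\langle S,\pi\rangle}(\theta|s)a(\theta)$. - Average pay: $W_A(p,q,\langle S,\pi\rangle):=\sum_\theta p(\theta)\sum_s\pi(s|\theta)w_A(s,q,\langle S,\pi\rangle)$. Orders on distributions and signal structures: - $q'\succsim_{LR}q$ means $q(\theta)q'(\theta')\ge q(\theta')q'(\theta)$ whenever $\theta'>\theta$. - $\langle S',\pi'\rangle\succsim_G\langle S,\pi\rangle$ means there is a garbling kernel $g:S\times S'\to[0,1]$ with $\sum_{s}g(s|s')=1$ for each $s'$ and $\pi(s|\theta)=\sum_{s'}g(s|s')\pi'(s'|\theta)$ for all $s,\theta$. - $\langle S,\pi\rangle$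 is MLR if $S\subset\mathbb{R}$ and $\pi(s|\theta)\pi(s'|\theta')\ge\pi(s|\theta')\pi(s'|\theta)$ whenever $s'>s$ and $\theta'>\theta$. Joint distributions: define $\mu_p,\mu_q\in\Delta(\Theta\times S\times S')$ by $\mu_r(\theta,s,s'):=r(\theta)\pi'(s'|\theta)g(s|s')$ for $r\in\{p,q\}$. Marginals and conditionals such as $\mu_r(s)$, $\mu_r(s'|s)$, $\mu_r(\theta|s,s')$ are derived from these in the usual way; summands whose conditioning event has zero probability are taken to be zero. Task selections: $\widehat a_s\in\arg\max_{a\in A}\sum_\theta q_{\langle S,\pi\rangle}(\theta|s)a(\theta)$ for each $s\in S$, and $\widehat a'_{s'}\in\arg\max_{a\in A}\sum_\theta q_{\langle S',\pi'\rangle}(\theta|s')a(\theta)$ for each $s'\in S'$. Components: - Perception-correcting: $\mathcal{C}_A(p,q,\langle S,\pi\rangle,\langle S',\pi'\rangle):=\sum_{s}\mu_p(s)\sum_{s'}[\mu_p(s'|s)-\mu_q(s'|s)]\sum_\theta\mu_q(\theta|s,s')\widehat a_s(\theta)$. - Instrumental: $\mathcal{I}_A(p,q,\langle S,\pi\rangle,\langle S',\pi'\rangle):=\sum_{s'}\mu_p(s')\sum_\theta q_{\langle S',\pi'\rangle}(\theta|s')\big[\widehat a'_{s'}(\theta)-\sum_s g(s|s')\widehat a_s(\theta)\big]$, which equals $\sum_s\mu_p(s)\sum_{s'}\mu_p(s'|s)\sum_\theta\mu_q(\theta|s,s')[\widehat a'_{s'}(\theta)-\widehat a_s(\theta)]$.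 *)

theory Defs
  imports Complex_Main
begin

(* Skill types: a finite set Th of reals. Tasks: functions real => real (only values on Th matter). Signal structures: a finite set S and pr :: 's => real => real,
   pr s th = pr(s|th). Division by zero is 0 in Isabelle, which realises the convention that
   summands with zero-probability conditioning events vanish. *)

definition full_support_dist :: "real set \<Rightarrow> (real \<Rightarrow> real) \<Rightarrow> bool" where
  "full_support_dist Th r \<longleftrightarrow> (\<forall>th\<in>Th. r th > 0) \<and> (\<Sum>th\<in>Th. r th) = 1"

definition signal_structure :: "real set \<Rightarrow> 's set \<Rightarrow> ('s \<Rightarrow> real \<Rightarrow> real) \<Rightarrow> bool" where
  "signal_structure Th S pr \<longleftrightarrow> finite S \<and> S \<noteq> {} \<and>
     (\<forall>s\<in>S. \<forall>th\<in>Th. 0 \<le> pr s th \<and> pr s th \<le> 1) \<and>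
     (\<forall>th\<in>Th. (\<Sum>s\<in>S. pr s th) = 1) \<and>
     (\<forall>s\<in>S. \<exists>th\<in>Th. pr s th > 0)"

definition firm :: "(real \<Rightarrow> real) set \<Rightarrow> bool" where
  "firm A \<longleftrightarrow> finite A \<and> A \<noteq> {}"

definition monotone_task :: "real set \<Rightarrow> (real \<Rightarrow> real) \<Rightarrow> bool" where
  "monotone_task Th a \<longleftrightarrow> (\<forall>th\<in>Th. \<forall>th'\<in>Th. th' > th \<longrightarrow> a th' > a th)"

definition monotone_firm :: "real set \<Rightarrow> (real \<Rightarrow> real) set \<Rightarrow> bool" where
  "monotone_firm Th A \<longleftrightarrow> (\<forall>a\<in>A. monotone_task Th a)"

definition posterior :: "real set \<Rightarrow> (real \<Rightarrow> real) \<Rightarrow> ('s \<Rightarrow> real \<Rightarrow> real) \<Rightarrow> 's \<Rightarrow> real \<Rightarrow> real" where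
  "posterior Th q pr s th = q th * pr s th / (\<Sum>th'\<in>Th. q th' * pr s th')"

definition expect :: "real set \<Rightarrow> (real \<Rightarrow> real) \<Rightarrow> (real \<Rightarrow> real) \<Rightarrow> real" where
  "expect Th r a = (\<Sum>th\<in>Th. r th * a th)"

definition pay :: "(real \<Rightarrow> real) set \<Rightarrow> real set \<Rightarrow> 's \<Rightarrow> (real \<Rightarrow> real) \<Rightarrow> ('s \<Rightarrow> real \<Rightarrow> real) \<Rightarrow> real" where
  "pay A Th s q pr = Max ((\<lambda>a. expect Th (posterior Th q pr s) a) ` A)"

definition avg_pay :: "(real \<Rightarrow> real) set \<Rightarrow> real set \<Rightarrow> (real \<Rightarrow> real) \<Rightarrow> (real \<Rightarrow> real) \<Rightarrow> 's set \<Rightarrow> ('s \<Rightarrow> real \<Rightarrow> real) \<Rightarrow> real" where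
  "avg_pay A Th p q S pr = (\<Sum>th\<in>Th. p th * (\<Sum>s\<in>S. pr s th * pay A Th s q pr))"

definition lr_ge :: "real set \<Rightarrow> (real \<Rightarrow> real) \<Rightarrow> (real \<Rightarrow> real) \<Rightarrow> bool" where
  "lr_ge Th q' q \<longleftrightarrow> (\<forall>th\<in>Th. \<forall>th'\<in>Th. th' > th \<longrightarrow> q th * q' th' \<ge> q th' * q' th)"

(* g is a garbling kernel showing <S',pr'> >=_G <S,pr>; g s s' = g(s|s') *)
definition garbling :: "real set \<Rightarrow> 's set \<Rightarrow> ('s \<Rightarrow> real \<Rightarrow> real) \<Rightarrow> 't set \<Rightarrow> ('t \<Rightarrow> real \<Rightarrow> real) \<Rightarrow> ('s \<Rightarrow> 't \<Rightarrow> real) \<Rightarrow> bool" where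
  "garbling Th S pr S' pr' g \<longleftrightarrow>
     (\<forall>s\<in>S. \<forall>s'\<in>S'. 0 \<le> g s s' \<and> g s s' \<le> 1) \<and>
     (\<forall>s'\<in>S'. (\<Sum>s\<in>S. g s s') = 1) \<and>
     (\<forall>s\<in>S. \<forall>th\<in>Th. pr s th = (\<Sum>s'\<in>S'. g s s' * pr' s' th))"

definition MLR :: "real set \<Rightarrow> real set \<Rightarrow> (real \<Rightarrow> real \<Rightarrow> real) \<Rightarrow> bool" where
  "MLR Th S pr \<longleftrightarrow> (\<forall>s\<in>S. \<forall>s'\<in>S. \<forall>th\<in>Th. \<forall>th'\<in>Th. s' > s \<and> th' > th \<longrightarrow>
       pr s th * pr s' th' \<ge> pr s th' * pr s' th)"

definition mu :: "(real \<Rightarrow> real) \<Rightarrow> ('t \<Rightarrow> real \<Rightarrow> real) \<Rightarrow> ('s \<Rightarrow> 't \<Rightarrow> real) \<Rightarrow> real \<Rightarrow> 's \<Rightarrow> 't \<Rightarrow> real" where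
  "mu r pr' g th s s' = r th * pr' s' th * g s s'"

definition mu_s :: "real set \<Rightarrow> 't set \<Rightarrow> (real \<Rightarrow> real) \<Rightarrow> ('t \<Rightarrow> real \<Rightarrow> real) \<Rightarrow> ('s \<Rightarrow> 't \<Rightarrow> real) \<Rightarrow> 's \<Rightarrow> real" where
  "mu_s Th S' r pr' g s = (\<Sum>th\<in>Th. \<Sum>s'\<in>S'. mu r pr' g th s s')"

definition mu_s' :: "real set \<Rightarrow> 's set \<Rightarrow> (real \<Rightarrow> real) \<Rightarrow> ('t \<Rightarrow> real \<Rightarrow> real) \<Rightarrow> ('s \<Rightarrow> 't \<Rightarrow> real) \<Rightarrow> 't \<Rightarrow> real" where
  "mu_s' Th S r pr' g s' = (\<Sum>th\<in>Th. \<Sum>s\<in>S. mu r pr' g th s s')"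

definition mu_ss' :: "real set \<Rightarrow> (real \<Rightarrow> real) \<Rightarrow> ('t \<Rightarrow> real \<Rightarrow> real) \<Rightarrow> ('s \<Rightarrow> 't \<Rightarrow> real) \<Rightarrow> 's \<Rightarrow> 't \<Rightarrow> real" where
  "mu_ss' Th r pr' g s s' = (\<Sum>th\<in>Th. mu r pr' g th s s')"

definition mu_s'_given_s :: "real set \<Rightarrow> 't set \<Rightarrow> (real \<Rightarrow> real) \<Rightarrow> ('t \<Rightarrow> real \<Rightarrow> real) \<Rightarrow> ('s \<Rightarrow> 't \<Rightarrow> real) \<Rightarrow> 't \<Rightarrow> 's \<Rightarrow> real" where
  "mu_s'_given_s Th S' r pr' g s' s = mu_ss' Th r pr' g s s' / mu_s Th S' r pr' g s"

definition mu_th_given_ss' :: "real set \<Rightarrow> (real \<Rightarrow> real) \<Rightarrow> ('t \<Rightarrow> real \<Rightarrow> real) \<Rightarrow> ('s \<Rightarrow> 't \<Rightarrow> real) \<Rightarrow> real \<Rightarrow> 's \<Rightarrow> 't \<Rightarrow> real" where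
  "mu_th_given_ss' Th r pr' g th s s' = mu r pr' g th s s' / mu_ss' Th r pr' g s s'"

definition optimal_selection :: "(real \<Rightarrow> real) set \<Rightarrow> real set \<Rightarrow> (real \<Rightarrow> real) \<Rightarrow> 's set \<Rightarrow> ('s \<Rightarrow> real \<Rightarrow> real) \<Rightarrow> ('s \<Rightarrow> real \<Rightarrow> real) \<Rightarrow> bool" where
  "optimal_selection A Th q S pr ahat \<longleftrightarrow>
     (\<forall>s\<in>S. ahat s \<in> A \<and> (\<forall>a\<in>A. expect Th (posterior Th q pr s) a \<le> expect Th (posterior Th q pr s) (ahat s)))"

definition perception_correcting ::
  "real set \<Rightarrow> (real \<Rightarrow> real) \<Rightarrow> (real \<Rightarrow> real) \<Rightarrow> 's set \<Rightarrow> 't set \<Rightarrow> ('t \<Rightarrow> real \<Rightarrow> real) \<Rightarrow> ('s \<Rightarrow> 't \<Rightarrow> real) \<Rightarrow> ('s \<Rightarrow> real \<Rightarrow> real) \<Rightarrow> real" where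
  "perception_correcting Th p q S S' pr' g ahat =
     (\<Sum>s\<in>S. mu_s Th S' p pr' g s *
        (\<Sum>s'\<in>S'. (mu_s'_given_s Th S' p pr' g s' s - mu_s'_given_s Th S' q pr' g s' s) *
           (\<Sum>th\<in>Th. mu_th_given_ss' Th q pr' g th s s' * ahat s th)))"

definition instrumental ::
  "real set \<Rightarrow> (real \<Rightarrow> real) \<Rightarrow> (real \<Rightarrow> real) \<Rightarrow> 's set \<Rightarrow> 't set \<Rightarrow> ('t \<Rightarrow> real \<Rightarrow> real) \<Rightarrow> ('s \<Rightarrow> 't \<Rightarrow> real) \<Rightarrow> ('s \<Rightarrow> real \<Rightarrow> real) \<Rightarrow> ('t \<Rightarrow> real \<Rightarrow> real) \<Rightarrow> real" where
  "instrumental Th p q S S' pr' g ahat ahat' =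
     (\<Sum>s'\<in>S'. mu_s' Th S p pr' g s' *
        (\<Sum>th\<in>Th. posterior Th q pr' s' th * (ahat' s' th - (\<Sum>s\<in>S. g s s' * ahat s th))))"

end

theory Submission
  imports Defs
begin

text \<open>
  Write \<open>m\<^sub>r(s)\<close> for the probability of a signal \<open>s\<close> under the skill law \<open>r\<close>. Both average
  pays are \<open>m\<^sub>p\<close>-weighted sums of perceived posterior means of the selected tasks. By the law
  of total expectation through the garbling, the perceived conditional law \<open>\<mu>\<^sub>q(s'|s)\<close>
  reproduces the average pay of the coarse signal; replacing it by the true law \<open>\<mu>\<^sub>p(s'|s)\<close>
  gives C, and re-optimising the task after observing \<open>s'\<close> gives I, which is nonnegative
  because \<open>ahat' s'\<close> is optimal against every \<open>g(\<cdot>|s')\<close>-mixture of the tasks \<open>ahat s\<close>.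

  For the sign of C, one symmetrisation inequality for double sums does all the work. Under
  MLR, \<open>\<mu>\<^sub>r(s'|s) \<propto> g(s|s') m\<^sub>r(s')\<close> increases in the likelihood-ratio order with \<open>r\<close>
  (a composition of TP2 kernels), and on the support of \<open>g(s|\<cdot>)\<close> the integrand of C is the
  posterior mean of the monotone task \<open>ahat s\<close>, which increases in \<open>s'\<close> because the
  posteriors do so in the likelihood-ratio order.
\<close>

lemma sum_cross_products_nonneg:
  fixes u v k l :: "'a::linorder \<Rightarrow> real"
  assumes "finite X"
    and cross: "\<And>a b. a \<in> X \<Longrightarrow> b \<in> X \<Longrightarrow> a < b \<Longrightarrow>
      (u a * v b - u b * v a) * (k a * l b - k b * l a) \<ge> 0"
  shows "(\<Sum>a\<in>X. u a * k a) * (\<Sum>b\<in>X. v b * l b) - (\<Sum>a\<in>X. u a * l a) * (\<Sum>b\<in>X. v b * k b) \<ge> 0"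
proof -
  define h where "h a b = u a * v b * (k a * l b - k b * l a)" for a b
  have pair: "h a b + h b a \<ge> 0" if "a \<in> X" "b \<in> X" for a b
  proof (cases a b rule: linorder_cases)
    case less
    then show ?thesis using cross[OF that less] by (simp add: h_def algebra_simps)
  next
    case greater
    then show ?thesis using cross[OF that(2,1) greater] by (simp add: h_def algebra_simps)
  qed (simp add: h_def)
  have "(\<Sum>a\<in>X. \<Sum>b\<in>X. h a b) = (\<Sum>a\<in>X. \<Sum>b\<in>X. h b a)"
    by (rule sum.swap)
  then have "2 * (\<Sum>a\<in>X. \<Sum>b\<in>X. h a b) = (\<Sum>a\<in>X. \<Sum>b\<in>X. h a b + h b a)"
    by (simp add: sum.distrib)
  also have "\<dots> \<ge> 0"
    using pair by (intro sum_nonneg) auto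
  finally have "(\<Sum>a\<in>X. \<Sum>b\<in>X. h a b) \<ge> 0" by simp
  moreover have "(\<Sum>a\<in>X. \<Sum>b\<in>X. h a b) =
      (\<Sum>a\<in>X. u a * k a) * (\<Sum>b\<in>X. v b * l b) - (\<Sum>a\<in>X. u a * l a) * (\<Sum>b\<in>X. v b * k b)"
    unfolding sum_product sum_subtractf[symmetric]
    by (intro sum.cong refl) (simp add: h_def algebra_simps)
  ultimately show ?thesis by simp
qed

lemma weighted_sum_le_if_cross_nonneg:
  fixes u v f :: "'a::linorder \<Rightarrow> real"
  assumes "finite X" "sum u X = 1" "sum v X = 1"
    and "\<And>a b. a \<in> X \<Longrightarrow> b \<in> X \<Longrightarrow> a < b \<Longrightarrow> (u a * v b - u b * v a) * (f b - f a) \<ge> 0"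
  shows "(\<Sum>a\<in>X. u a * f a) \<le> (\<Sum>a\<in>X. v a * f a)"
  using sum_cross_products_nonneg[of X u v "\<lambda>_. 1" f] assms by simp

lemma expect_mono_lr_ge:
  assumes "finite Th" "sum u Th = 1" "sum v Th = 1" "lr_ge Th v u" "mono_on Th f"
  shows "expect Th u f \<le> expect Th v f"
  unfolding expect_def
proof (rule weighted_sum_le_if_cross_nonneg[OF assms(1-3)])
  fix a b assume "a \<in> Th" "b \<in> Th" "a < b"
  then show "(u a * v b - u b * v a) * (f b - f a) \<ge> 0"
    using assms(4,5) by (auto simp: lr_ge_def mono_on_def intro!: mult_nonneg_nonneg)
qed

lemma monotone_task_mono_on: "monotone_task Th a \<Longrightarrow> mono_on Th a"
  unfolding monotone_task_def mono_on_def by (metis order_le_less less_imp_le)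

definition marginal :: "real set \<Rightarrow> (real \<Rightarrow> real) \<Rightarrow> ('s \<Rightarrow> real \<Rightarrow> real) \<Rightarrow> 's \<Rightarrow> real" where
  "marginal Th r pr s = (\<Sum>th\<in>Th. r th * pr s th)"

lemma marginal_pos:
  assumes "finite Th" "full_support_dist Th r" "signal_structure Th S pr" "s \<in> S"
  shows "marginal Th r pr s > 0"
proof -
  obtain th0 where "th0 \<in> Th" "pr s th0 > 0"
    using assms(3,4) unfolding signal_structure_def by blast
  with assms show ?thesis
    unfolding marginal_def full_support_dist_def signal_structure_def
    by (intro sum_pos2[of _ th0]) (auto intro: less_imp_le)
qed

lemma marginal_mult_expect_posterior:
  assumes "marginal Th q pr s \<noteq> 0"
  shows "marginal Th q pr s * expect Th (posterior Th q pr s) f = (\<Sum>th\<in>Th. q th * pr s th * f th)"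
  using assms unfolding expect_def posterior_def marginal_def[symmetric]
  by (simp add: sum_distrib_left)

lemma sum_posterior:
  assumes "marginal Th q pr s \<noteq> 0"
  shows "sum (posterior Th q pr s) Th = 1"
  using marginal_mult_expect_posterior[OF assms, of "\<lambda>_. 1"] assms
  by (simp add: expect_def marginal_def)

lemma lr_ge_posterior_MLR:
  assumes "full_support_dist Th q" "signal_structure Th S pr" "MLR Th S pr"
    and "x \<in> S" "y \<in> S" "x < y"
  shows "lr_ge Th (posterior Th q pr y) (posterior Th q pr x)"
  unfolding lr_ge_def
proof (intro ballI impI)
  fix a b assume "a \<in> Th" "b \<in> Th" "a < b"
  then have "pr x b * pr y a \<le> pr x a * pr y b" "q a > 0" "q b > 0"
    using assms unfolding MLR_def full_support_dist_def by (auto simp: mult.commute)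
  moreover have "marginal Th q pr x * marginal Th q pr y \<ge> 0"
    using assms unfolding marginal_def full_support_dist_def signal_structure_def
    by (intro mult_nonneg_nonneg sum_nonneg) (auto intro: less_imp_le)
  ultimately have "q a * q b * (pr x b * pr y a) / (marginal Th q pr x * marginal Th q pr y)
      \<le> q a * q b * (pr x a * pr y b) / (marginal Th q pr x * marginal Th q pr y)"
    by (intro divide_right_mono mult_left_mono) auto
  then show "posterior Th q pr x b * posterior Th q pr y a \<le> posterior Th q pr x a * posterior Th q pr y b"
    by (simp add: posterior_def marginal_def[symmetric] field_simps)
qed

lemma marginal_cross_nonneg_MLR:
  assumes "finite Th" "lr_ge Th r1 r2" "MLR Th S pr" "x \<in> S" "y \<in> S" "x < y"
  shows "marginal Th r2 pr x * marginal Th r1 pr y - marginal Th r2 pr y * marginal Th r1 pr x \<ge> 0"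
  unfolding marginal_def
proof (rule sum_cross_products_nonneg[OF assms(1)])
  fix a b assume "a \<in> Th" "b \<in> Th" "a < b"
  with assms show "(r2 a * r1 b - r2 b * r1 a) * (pr x a * pr y b - pr x b * pr y a) \<ge> 0"
    unfolding lr_ge_def MLR_def by (auto simp: mult.commute intro!: mult_nonneg_nonneg)
qed

lemma pay_optimal_selection:
  assumes "firm A" "optimal_selection A Th q S pr ahat" "s \<in> S"
  shows "pay A Th s q pr = expect Th (posterior Th q pr s) (ahat s)"
  unfolding pay_def
  by (rule Max_eqI) (use assms in \<open>auto simp: firm_def optimal_selection_def\<close>)

lemma avg_pay_optimal_selection:
  assumes "firm A" "optimal_selection A Th q S pr ahat"
  shows "avg_pay A Th p q S pr = (\<Sum>s\<in>S. marginal Th p pr s * expect Th (posterior Th q pr s) (ahat s))"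
proof -
  have "avg_pay A Th p q S pr = (\<Sum>th\<in>Th. \<Sum>s\<in>S. p th * pr s th * pay A Th s q pr)"
    unfolding avg_pay_def by (simp add: sum_distrib_left mult.assoc)
  also have "\<dots> = (\<Sum>s\<in>S. marginal Th p pr s * pay A Th s q pr)"
    by (subst sum.swap) (simp add: marginal_def sum_distrib_right)
  finally show ?thesis
    using pay_optimal_selection[OF assms] by simp
qed

lemma mu_s_garbling:
  assumes "garbling Th S pr S' pr' g" "s \<in> S"
  shows "mu_s Th S' r pr' g s = marginal Th r pr s"
  using assms unfolding mu_s_def mu_def marginal_def garbling_def
  by (intro sum.cong refl) (simp add: sum_distrib_left mult_ac)

lemma mu_s'_garbling:
  assumes "garbling Th S pr S' pr' g" "s' \<in> S'"
  shows "mu_s' Th S r pr' g s' = marginal Th r pr' s'"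
  using assms unfolding mu_s'_def mu_def marginal_def garbling_def
  by (intro sum.cong refl) (simp add: sum_distrib_left[symmetric])

lemma mu_ss'_eq: "mu_ss' Th r pr' g s s' = g s s' * marginal Th r pr' s'"
  unfolding mu_ss'_def mu_def marginal_def by (simp add: sum_distrib_left mult_ac)

text \<open>The factor \<open>g s s'\<close> disposes of the case \<open>g s s' = 0\<close>, where the conditional law
  \<open>mu_th_given_ss'\<close> is \<open>0 / 0 = 0\<close> rather than the posterior.\<close>

lemma garbling_mult_cond_expect:
  "g s s' * (\<Sum>th\<in>Th. mu_th_given_ss' Th q pr' g th s s' * f th)
     = g s s' * expect Th (posterior Th q pr' s') f"
  unfolding mu_th_given_ss'_def mu_ss'_eq expect_def posterior_def mu_def marginal_def[symmetric]
  by (cases "g s s' = 0") (simp_all add: sum_distrib_left)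

lemma garbling_total_expectation:
  assumes "garbling Th S pr S' pr' g" "s \<in> S"
    and "marginal Th q pr s \<noteq> 0" "\<And>s'. s' \<in> S' \<Longrightarrow> marginal Th q pr' s' \<noteq> 0"
  shows "(\<Sum>s'\<in>S'. g s s' * marginal Th q pr' s' * expect Th (posterior Th q pr' s') f)
       = marginal Th q pr s * expect Th (posterior Th q pr s) f"
proof -
  have "(\<Sum>s'\<in>S'. g s s' * marginal Th q pr' s' * expect Th (posterior Th q pr' s') f)
      = (\<Sum>s'\<in>S'. \<Sum>th\<in>Th. g s s' * (q th * pr' s' th * f th))"
    using assms(4) by (simp add: marginal_mult_expect_posterior mult.assoc sum_distrib_left)
  also have "\<dots> = (\<Sum>th\<in>Th. q th * pr s th * f th)"
    using assms(1,2) unfolding garbling_def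
    by (subst sum.swap) (simp add: sum_distrib_left sum_distrib_right mult_ac)
  finally show ?thesis
    using marginal_mult_expect_posterior[OF assms(3)] by simp
qed

locale garbling_setting =
  fixes Th :: "real set" and p q :: "real \<Rightarrow> real"
    and S :: "'s set" and pr :: "'s \<Rightarrow> real \<Rightarrow> real"
    and S' :: "'t set" and pr' :: "'t \<Rightarrow> real \<Rightarrow> real"
    and g :: "'s \<Rightarrow> 't \<Rightarrow> real"
  assumes finite_Th: "finite Th"
    and p: "full_support_dist Th p" and q: "full_support_dist Th q"
    and S: "signal_structure Th S pr" and S': "signal_structure Th S' pr'"
    and g: "garbling Th S pr S' pr' g"
begin

lemma mu_s_pos: "full_support_dist Th r \<Longrightarrow> s \<in> S \<Longrightarrow> mu_s Th S' r pr' g s > 0"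
  using marginal_pos[OF finite_Th _ S] mu_s_garbling[OF g] by simp

lemma mu_s_mult_mu_s'_given_s:
  "full_support_dist Th r \<Longrightarrow> s \<in> S \<Longrightarrow>
    mu_s Th S' r pr' g s * mu_s'_given_s Th S' r pr' g s' s = g s s' * marginal Th r pr' s'"
  using mu_s_pos unfolding mu_s'_given_s_def mu_ss'_eq by (simp add: less_imp_neq[symmetric])

lemma sum_mu_s'_given_s:
  assumes "full_support_dist Th r" "s \<in> S"
  shows "(\<Sum>s'\<in>S'. mu_s'_given_s Th S' r pr' g s' s) = 1"
proof -
  have "mu_s Th S' r pr' g s = (\<Sum>s'\<in>S'. mu_ss' Th r pr' g s s')"
    unfolding mu_s_def mu_ss'_def by (rule sum.swap)
  then show ?thesis
    using mu_s_pos[OF assms] unfolding mu_s'_given_s_def by (simp add: sum_divide_distrib[symmetric])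
qed

lemma instrumental_eq:
  "instrumental Th p q S S' pr' g ahat ahat' =
    (\<Sum>s'\<in>S'. marginal Th p pr' s' * (expect Th (posterior Th q pr' s') (ahat' s')
       - (\<Sum>s\<in>S. g s s' * expect Th (posterior Th q pr' s') (ahat s))))"
proof -
  have "(\<Sum>th\<in>Th. posterior Th q pr' s' th * (\<Sum>s\<in>S. g s s' * ahat s th))
      = (\<Sum>s\<in>S. g s s' * expect Th (posterior Th q pr' s') (ahat s))" for s'
    unfolding expect_def sum_distrib_left by (subst sum.swap) (simp add: mult_ac)
  then show ?thesis
    unfolding instrumental_def
    by (intro sum.cong refl) (simp add: mu_s'_garbling[OF g] expect_def right_diff_distrib sum_subtractf)
qed

definition cond_value :: "(real \<Rightarrow> real) \<Rightarrow> (real \<Rightarrow> real) \<Rightarrow> 's \<Rightarrow> real" where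
  "cond_value r a s = (\<Sum>s'\<in>S'. mu_s'_given_s Th S' r pr' g s' s
     * (\<Sum>th\<in>Th. mu_th_given_ss' Th q pr' g th s s' * a th))"

lemma perception_correcting_cond_value:
  "perception_correcting Th p q S S' pr' g ahat =
    (\<Sum>s\<in>S. mu_s Th S' p pr' g s * (cond_value p (ahat s) s - cond_value q (ahat s) s))"
  unfolding perception_correcting_def cond_value_def
  by (simp add: left_diff_distrib right_diff_distrib sum_subtractf)

lemma mu_s_mult_cond_value:
  assumes "full_support_dist Th r" "s \<in> S"
  shows "mu_s Th S' r pr' g s * cond_value r a s
    = (\<Sum>s'\<in>S'. g s s' * marginal Th r pr' s' * expect Th (posterior Th q pr' s') a)"
proof -
  have joint: "mu_s Th S' r pr' g s * (mu_s'_given_s Th S' r pr' g s' s * x)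
      = marginal Th r pr' s' * (g s s' * x)" for s' x
    using mu_s_mult_mu_s'_given_s[OF assms] by (simp add: mult_ac)
  show ?thesis
    unfolding cond_value_def sum_distrib_left[of "mu_s Th S' r pr' g s"]
    by (simp only: joint garbling_mult_cond_expect) (simp add: mult_ac)
qed

lemma cond_value_perceived:
  assumes "s \<in> S"
  shows "cond_value q a s = expect Th (posterior Th q pr s) a"
proof -
  have "marginal Th q pr' s' \<noteq> 0" if "s' \<in> S'" for s'
    using marginal_pos[OF finite_Th q S' that] by simp
  then have "mu_s Th S' q pr' g s * cond_value q a s
      = marginal Th q pr s * expect Th (posterior Th q pr s) a"
    using mu_s_mult_cond_value[OF q assms] garbling_total_expectation[OF g assms]
      marginal_pos[OF finite_Th q S assms] by simp
  then show ?thesis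
    using mu_s_garbling[OF g assms] marginal_pos[OF finite_Th q S assms] by simp
qed

lemma perception_correcting_eq:
  "perception_correcting Th p q S S' pr' g ahat =
    (\<Sum>s'\<in>S'. marginal Th p pr' s' * (\<Sum>s\<in>S. g s s' * expect Th (posterior Th q pr' s') (ahat s)))
    - (\<Sum>s\<in>S. marginal Th p pr s * expect Th (posterior Th q pr s) (ahat s))"
proof -
  have "perception_correcting Th p q S S' pr' g ahat =
      (\<Sum>s\<in>S. \<Sum>s'\<in>S'. g s s' * marginal Th p pr' s' * expect Th (posterior Th q pr' s') (ahat s))
      - (\<Sum>s\<in>S. marginal Th p pr s * expect Th (posterior Th q pr s) (ahat s))"
    unfolding perception_correcting_cond_value right_diff_distrib sum_subtractf
    using mu_s_mult_cond_value[OF p] cond_value_perceived mu_s_garbling[OF g] by simp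
  then show ?thesis
    by (subst (asm) sum.swap) (simp add: sum_distrib_left mult_ac)
qed

lemma avg_pay_decomposition:
  assumes "firm A" "optimal_selection A Th q S pr ahat" "optimal_selection A Th q S' pr' ahat'"
  shows "avg_pay A Th p q S' pr' - avg_pay A Th p q S pr
    = perception_correcting Th p q S S' pr' g ahat + instrumental Th p q S S' pr' g ahat ahat'"
  unfolding avg_pay_optimal_selection[OF assms(1,2)] avg_pay_optimal_selection[OF assms(1,3)]
    perception_correcting_eq instrumental_eq
  by (simp add: right_diff_distrib sum_subtractf)

lemma instrumental_nonneg:
  assumes "optimal_selection A Th q S pr ahat" "optimal_selection A Th q S' pr' ahat'"
  shows "instrumental Th p q S S' pr' g ahat ahat' \<ge> 0"
  unfolding instrumental_eq
proof (intro sum_nonneg mult_nonneg_nonneg)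
  fix s' assume "s' \<in> S'"
  show "marginal Th p pr' s' \<ge> 0"
    using marginal_pos[OF finite_Th p S' \<open>s' \<in> S'\<close>] by simp
  have "(\<Sum>s\<in>S. g s s' * expect Th (posterior Th q pr' s') (ahat s))
      \<le> (\<Sum>s\<in>S. g s s' * expect Th (posterior Th q pr' s') (ahat' s'))"
    using assms g \<open>s' \<in> S'\<close> unfolding optimal_selection_def garbling_def
    by (intro sum_mono mult_left_mono) auto
  also have "\<dots> = expect Th (posterior Th q pr' s') (ahat' s')"
    using g \<open>s' \<in> S'\<close> unfolding garbling_def by (simp add: sum_distrib_right[symmetric])
  finally show "expect Th (posterior Th q pr' s') (ahat' s')
      - (\<Sum>s\<in>S. g s s' * expect Th (posterior Th q pr' s') (ahat s)) \<ge> 0"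
    by simp
qed

end

locale mlr_garbling_setting = garbling_setting Th p q S pr S' pr' g
  for Th p q S pr and S' :: "real set" and pr' :: "real \<Rightarrow> real \<Rightarrow> real" and g +
  assumes mlr: "MLR Th S' pr'"
begin

lemma cond_value_mono_lr:
  assumes r1: "full_support_dist Th r1" and r2: "full_support_dist Th r2" and "lr_ge Th r1 r2"
    and "mono_on Th a" and "s \<in> S"
  shows "cond_value r2 a s \<le> cond_value r1 a s"
  unfolding cond_value_def
proof (rule weighted_sum_le_if_cross_nonneg)
  show "finite S'" using S' by (simp add: signal_structure_def)
  show "(\<Sum>s'\<in>S'. mu_s'_given_s Th S' r2 pr' g s' s) = 1"
    and "(\<Sum>s'\<in>S'. mu_s'_given_s Th S' r1 pr' g s' s) = 1"
    using sum_mu_s'_given_s \<open>s \<in> S\<close> r1 r2 by auto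
next
  fix x y assume x: "x \<in> S'" and y: "y \<in> S'" and "x < y"
  define F where "F s' = (\<Sum>th\<in>Th. mu_th_given_ss' Th q pr' g th s s' * a th)" for s'
  have F: "F s' = expect Th (posterior Th q pr' s') a" if "g s s' \<noteq> 0" for s'
    using garbling_mult_cond_expect[of g s s' Th q pr' a] that unfolding F_def by simp
  define cross where "cross = mu_s'_given_s Th S' r2 pr' g x s * mu_s'_given_s Th S' r1 pr' g y s
      - mu_s'_given_s Th S' r2 pr' g y s * mu_s'_given_s Th S' r1 pr' g x s"
  have cross_eq: "cross = g s x * g s y
      * (marginal Th r2 pr' x * marginal Th r1 pr' y - marginal Th r2 pr' y * marginal Th r1 pr' x)
      / (mu_s Th S' r2 pr' g s * mu_s Th S' r1 pr' g s)"
    using mu_s_pos[OF r1 \<open>s \<in> S\<close>] mu_s_pos[OF r2 \<open>s \<in> S\<close>]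
    unfolding cross_def mu_s'_given_s_def mu_ss'_eq by (simp add: field_simps)
  have "cross \<ge> 0"
    using marginal_cross_nonneg_MLR[OF finite_Th \<open>lr_ge Th r1 r2\<close> mlr x y \<open>x < y\<close>]
      g \<open>s \<in> S\<close> x y mu_s_pos[OF r1 \<open>s \<in> S\<close>] mu_s_pos[OF r2 \<open>s \<in> S\<close>]
    unfolding cross_eq garbling_def by simp
  moreover have "F x \<le> F y" if "g s x \<noteq> 0" "g s y \<noteq> 0"
  proof -
    have "marginal Th q pr' s' \<noteq> 0" if "s' \<in> S'" for s'
      using marginal_pos[OF finite_Th q S' that] by simp
    then show ?thesis
      unfolding F[OF that(1)] F[OF that(2)]
      using expect_mono_lr_ge[OF finite_Th sum_posterior sum_posterior
          lr_ge_posterior_MLR[OF q S' mlr x y \<open>x < y\<close>] \<open>mono_on Th a\<close>] x y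
      by simp
  qed
  moreover have "cross = 0" if "g s x = 0 \<or> g s y = 0"
    using that unfolding cross_eq by auto
  ultimately have "cross * (F y - F x) \<ge> 0"
    by (cases "g s x = 0 \<or> g s y = 0") auto
  then show "(mu_s'_given_s Th S' r2 pr' g x s * mu_s'_given_s Th S' r1 pr' g y s
      - mu_s'_given_s Th S' r2 pr' g y s * mu_s'_given_s Th S' r1 pr' g x s) * (F y - F x) \<ge> 0"
    unfolding cross_def .
qed

lemma perception_correcting_nonneg:
  assumes "\<And>s. s \<in> S \<Longrightarrow> mono_on Th (ahat s)" and "lr_ge Th p q"
  shows "perception_correcting Th p q S S' pr' g ahat \<ge> 0"
  unfolding perception_correcting_cond_value
  using mu_s_pos[OF p] cond_value_mono_lr[OF p q \<open>lr_ge Th p q\<close> assms(1)]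
  by (intro sum_nonneg) (simp add: less_imp_le)

lemma perception_correcting_nonpos:
  assumes "\<And>s. s \<in> S \<Longrightarrow> mono_on Th (ahat s)" and "lr_ge Th q p"
  shows "perception_correcting Th p q S S' pr' g ahat \<le> 0"
  unfolding perception_correcting_cond_value
  using mu_s_pos[OF p] cond_value_mono_lr[OF q p \<open>lr_ge Th q p\<close> assms(1)]
  by (intro sum_nonpos) (simp add: mult_nonneg_nonpos less_imp_le)

end

theorem theorem1:
  fixes Th :: "real set" and A :: "(real \<Rightarrow> real) set"
    and p q :: "real \<Rightarrow> real"
    and S :: "'s set" and pr :: "'s \<Rightarrow> real \<Rightarrow> real"
    and S' :: "real set" and pr' :: "real \<Rightarrow> real \<Rightarrow> real"
    and g :: "'s \<Rightarrow> real \<Rightarrow> real"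
    and ahat :: "'s \<Rightarrow> real \<Rightarrow> real" and ahat' :: "real \<Rightarrow> real \<Rightarrow> real"
  assumes Th: "finite Th" "card Th \<ge> 2"
    and A: "firm A"
    and p: "full_support_dist Th p" and q: "full_support_dist Th q"
    and S: "signal_structure Th S pr" and S': "signal_structure Th S' pr'"
    and g: "garbling Th S pr S' pr' g"
    and sel: "optimal_selection A Th q S pr ahat"
    and sel': "optimal_selection A Th q S' pr' ahat'"
  shows
    "avg_pay A Th p q S' pr' - avg_pay A Th p q S pr
       = perception_correcting Th p q S S' pr' g ahat + instrumental Th p q S S' pr' g ahat ahat'
     \<and> instrumental Th p q S S' pr' g ahat ahat' \<ge> 0
     \<and> (monotone_firm Th A \<and> MLR Th S' pr' \<longrightarrow>
          (lr_ge Th p q \<longrightarrow> perception_correcting Th p q S S' pr' g ahat \<ge> 0)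
        \<and> (lr_ge Th q p \<longrightarrow> perception_correcting Th p q S S' pr' g ahat \<le> 0))"
proof -
  interpret garbling_setting Th p q S pr S' pr' g
    using Th(1) p q S S' g by unfold_locales
  have sign: "(lr_ge Th p q \<longrightarrow> perception_correcting Th p q S S' pr' g ahat \<ge> 0)
      \<and> (lr_ge Th q p \<longrightarrow> perception_correcting Th p q S S' pr' g ahat \<le> 0)"
    if "monotone_firm Th A" "MLR Th S' pr'"
  proof -
    interpret mlr_garbling_setting Th p q S pr S' pr' g
      using \<open>MLR Th S' pr'\<close> by unfold_locales
    have "mono_on Th (ahat s)" if "s \<in> S" for s
      using sel \<open>monotone_firm Th A\<close> that
      unfolding optimal_selection_def monotone_firm_def by (blast intro: monotone_task_mono_on)
    then show ?thesis
      using perception_correcting_nonneg perception_correcting_nonpos by blast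
  qed
  show ?thesis
    using avg_pay_decomposition[OF A sel sel'] instrumental_nonneg[OF sel sel'] sign by blast
qed

end
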